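(* Let $R$ be a ring and $I$ a regular ideal of $R$ such that idempotents lift modulo $I$. Then $R$ is weakly $r$-clean if and only if $R/I$ is weakly $r$-clean.
   Context: Rings are associative with identity. $Idem(R)$ denotes the idempotents and $Reg(R)=\{r\in R: r=ryr \text{ for some } y\in R\}$ the (von Neumann) regular elements. An ideal $I$ is regular if every element of $I$ is a regular element. Idempotents lift modulo $I$ if for every $x\in R$ with $x^2-x\in I$ there is $e\in Idem(R)$ with $e-x\in I$. An element $x$ is weakly $r$-clean if $x=r+e$ or $x=r-e$ for some $r\in Reg(R)$, $e\in Idem(R)$; a ring is weakly $r$-clean if all its elements are. *)

theory Defs
  imports "HOL-Algebra.QuotRing"
begin

definition Idems :: "('a, 'b) ring_scheme \<Rightarrow> 'a set" where
  "Idems S = {e \<in> carrier S. mult S e e = e}"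

definition Regs :: "('a, 'b) ring_scheme \<Rightarrow> 'a set" where
  "Regs S = {r \<in> carrier S. \<exists>y \<in> carrier S. r = mult S (mult S r y) r}"

definition regular_ideal :: "('a, 'b) ring_scheme \<Rightarrow> 'a set \<Rightarrow> bool" where
  "regular_ideal S I \<longleftrightarrow> ideal I S \<and> I \<subseteq> Regs S"

definition idempotents_lift :: "('a, 'b) ring_scheme \<Rightarrow> 'a set \<Rightarrow> bool" where
  "idempotents_lift S I \<longleftrightarrow>
     (\<forall>x \<in> carrier S. a_minus S (mult S x x) x \<in> I \<longrightarrow>
        (\<exists>e \<in> Idems S. a_minus S e x \<in> I))"

definition weakly_r_clean_elem :: "('a, 'b) ring_scheme \<Rightarrow> 'a \<Rightarrow> bool" where
  "weakly_r_clean_elem S x \<longleftrightarrow>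
     (\<exists>r \<in> Regs S. \<exists>e \<in> Idems S. x = add S r e \<or> x = a_minus S r e)"

definition weakly_r_clean :: "('a, 'b) ring_scheme \<Rightarrow> bool" where
  "weakly_r_clean S \<longleftrightarrow> (\<forall>x \<in> carrier S. weakly_r_clean_elem S x)"

end

theory Submission
  imports Defs
begin

text \<open>A ring homomorphism maps regular elements and idempotents to regular elements
  and idempotents, so weak r-cleanness passes to every image. Conversely, write
  \<open>x + I = \<rho> \<plusminus> \<epsilon>\<close> in \<open>R/I\<close>, lift \<open>\<epsilon>\<close> to an idempotent \<open>f\<close> of \<open>R\<close> and put
  \<open>s = x \<mp> f\<close>. Then \<open>s + I = \<rho>\<close> is regular, so \<open>d = s - s y s \<in> I\<close> for some \<open>y\<close>;
  as \<open>I\<close> is regular, \<open>d = d z d\<close> for some \<open>z\<close>, and a direct computation shows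
  \<open>s w s = s\<close> for \<open>w = y + (1 - y s) z (1 - s y)\<close>.\<close>

lemma (in ring) Regs_of_Regs_defect:
  assumes s: "s \<in> carrier R" and y: "y \<in> carrier R"
    and defect: "s \<ominus> s \<otimes> y \<otimes> s \<in> Regs R"
  shows "s \<in> Regs R"
proof -
  let ?d = "s \<ominus> s \<otimes> y \<otimes> s"
  from defect obtain z where z: "z \<in> carrier R" and dz: "?d = ?d \<otimes> z \<otimes> ?d"
    unfolding Regs_def by auto
  define w where "w = y \<oplus> (\<one> \<ominus> y \<otimes> s) \<otimes> z \<otimes> (\<one> \<ominus> s \<otimes> y)"
  have w: "w \<in> carrier R" using s y z by (simp add: w_def)
  have left: "s \<otimes> (\<one> \<ominus> y \<otimes> s) = ?d"
    using s y by (simp add: minus_eq r_distr r_minus m_assoc)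
  have right: "(\<one> \<ominus> s \<otimes> y) \<otimes> s = ?d"
    using s y by (simp add: minus_eq l_distr l_minus m_assoc)
  have "s \<otimes> w \<otimes> s = s \<otimes> y \<otimes> s \<oplus> s \<otimes> ((\<one> \<ominus> y \<otimes> s) \<otimes> z \<otimes> (\<one> \<ominus> s \<otimes> y)) \<otimes> s"
    using s y z by (simp add: w_def r_distr l_distr)
  also have "s \<otimes> ((\<one> \<ominus> y \<otimes> s) \<otimes> z \<otimes> (\<one> \<ominus> s \<otimes> y)) \<otimes> s
      = (s \<otimes> (\<one> \<ominus> y \<otimes> s)) \<otimes> z \<otimes> ((\<one> \<ominus> s \<otimes> y) \<otimes> s)"
    using s y z by (simp add: m_assoc)
  also have "\<dots> = ?d" using left right dz by simp
  also have "s \<otimes> y \<otimes> s \<oplus> ?d = s"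
    using s y by (simp add: minus_eq a_lcomm r_neg)
  finally show ?thesis using s w unfolding Regs_def by (auto intro!: bexI[of _ w])
qed

lemma (in ring) add_minus_cancel:
  assumes "a \<in> carrier R" "b \<in> carrier R"
  shows "a \<oplus> b \<ominus> b = a" and "a \<ominus> b \<oplus> b = a"
  using assms by (simp_all add: minus_eq a_assoc r_neg l_neg)

lemma (in ring) weakly_r_clean_elem_iff:
  assumes x: "x \<in> carrier R"
  shows "weakly_r_clean_elem R x \<longleftrightarrow> (\<exists>e \<in> Idems R. x \<ominus> e \<in> Regs R \<or> x \<oplus> e \<in> Regs R)"
proof
  assume "weakly_r_clean_elem R x"
  then obtain r e where r: "r \<in> Regs R" and e: "e \<in> Idems R"
    and "x = r \<oplus> e \<or> x = r \<ominus> e"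
    unfolding weakly_r_clean_elem_def by blast
  moreover have "r \<in> carrier R" "e \<in> carrier R"
    using r e unfolding Regs_def Idems_def by auto
  ultimately show "\<exists>e \<in> Idems R. x \<ominus> e \<in> Regs R \<or> x \<oplus> e \<in> Regs R"
    by (intro bexI[OF _ e]) (auto simp: add_minus_cancel)
next
  assume "\<exists>e \<in> Idems R. x \<ominus> e \<in> Regs R \<or> x \<oplus> e \<in> Regs R"
  then obtain e where e: "e \<in> Idems R" and "x \<ominus> e \<in> Regs R \<or> x \<oplus> e \<in> Regs R"
    by blast
  moreover have "e \<in> carrier R" using e unfolding Idems_def by auto
  ultimately show "weakly_r_clean_elem R x"
    unfolding weakly_r_clean_elem_def using x add_minus_cancel by metis
qed

context ring_hom_ring
begin

lemma hom_a_minus: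
  "a \<in> carrier R \<Longrightarrow> b \<in> carrier R \<Longrightarrow> h (a \<ominus>\<^bsub>R\<^esub> b) = h a \<ominus>\<^bsub>S\<^esub> h b"
  by (simp add: R.minus_eq S.minus_eq)

lemma Regs_image:
  assumes "r \<in> Regs R"
  shows "h r \<in> Regs S"
proof -
  from assms obtain t where r: "r \<in> carrier R" and t: "t \<in> carrier R"
    and rtr: "r = r \<otimes>\<^bsub>R\<^esub> t \<otimes>\<^bsub>R\<^esub> r"
    unfolding Regs_def by blast
  from rtr have "h r = h (r \<otimes>\<^bsub>R\<^esub> t \<otimes>\<^bsub>R\<^esub> r)" by (rule arg_cong)
  also have "\<dots> = h r \<otimes>\<^bsub>S\<^esub> h t \<otimes>\<^bsub>S\<^esub> h r" using r t by simp
  finally show ?thesis using r t unfolding Regs_def by auto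
qed

lemma Idems_image:
  assumes "e \<in> Idems R"
  shows "h e \<in> Idems S"
proof -
  from assms have e: "e \<in> carrier R" and "e \<otimes>\<^bsub>R\<^esub> e = e"
    unfolding Idems_def by auto
  then have "h e \<otimes>\<^bsub>S\<^esub> h e = h e" by (simp flip: hom_mult)
  then show ?thesis using e unfolding Idems_def by simp
qed

lemma weakly_r_clean_elem_image:
  assumes x: "x \<in> carrier R" and "weakly_r_clean_elem R x"
  shows "weakly_r_clean_elem S (h x)"
proof -
  from assms obtain e where e: "e \<in> Idems R"
    and reg: "x \<ominus>\<^bsub>R\<^esub> e \<in> Regs R \<or> x \<oplus>\<^bsub>R\<^esub> e \<in> Regs R"
    using R.weakly_r_clean_elem_iff by blast
  have "e \<in> carrier R" using e unfolding Idems_def by simp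
  then have "h (x \<ominus>\<^bsub>R\<^esub> e) = h x \<ominus>\<^bsub>S\<^esub> h e" "h (x \<oplus>\<^bsub>R\<^esub> e) = h x \<oplus>\<^bsub>S\<^esub> h e"
    using x by (simp_all add: hom_a_minus)
  with reg have "h x \<ominus>\<^bsub>S\<^esub> h e \<in> Regs S \<or> h x \<oplus>\<^bsub>S\<^esub> h e \<in> Regs S"
    using Regs_image[of "x \<ominus>\<^bsub>R\<^esub> e"] Regs_image[of "x \<oplus>\<^bsub>R\<^esub> e"] by argo
  then show ?thesis
    using Idems_image[OF e] S.weakly_r_clean_elem_iff[OF hom_closed[OF x]] by blast
qed

lemma weakly_r_clean_image:
  assumes "h ` carrier R = carrier S" and "weakly_r_clean R"
  shows "weakly_r_clean S"
  unfolding weakly_r_clean_def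
proof
  fix y assume "y \<in> carrier S"
  with assms(1) obtain x where "x \<in> carrier R" and "y = h x" by blast
  with assms(2) show "weakly_r_clean_elem S y"
    using weakly_r_clean_elem_image unfolding weakly_r_clean_def by blast
qed

end

context ideal
begin

lemma quotient_carrier_eq_image: "carrier (R Quot I) = (+>) I ` carrier R"
  unfolding FactRing_def A_RCOSETS_def RCOSETS_def a_r_coset_def by auto

lemma rcos_eq_iff:
  assumes "a \<in> carrier R" "b \<in> carrier R"
  shows "I +> a = I +> b \<longleftrightarrow> a \<ominus> b \<in> I"
  using assms a_rcos_module_minus[OF ring_axioms] a_repr_independence' a_repr_independenceD
  by metis

lemma Regs_lift:
  assumes reg: "I \<subseteq> Regs R" and s: "s \<in> carrier R" and "I +> s \<in> Regs (R Quot I)"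
  shows "s \<in> Regs R"
proof -
  interpret Q: ring_hom_ring R "R Quot I" "(+>) I" by (rule rcos_ring_hom_ring)
  from assms obtain \<eta> where "\<eta> \<in> carrier (R Quot I)"
    and inner: "I +> s = (I +> s) \<otimes>\<^bsub>R Quot I\<^esub> \<eta> \<otimes>\<^bsub>R Quot I\<^esub> (I +> s)"
    unfolding Regs_def by blast
  then obtain y where y: "y \<in> carrier R" and "\<eta> = I +> y"
    using quotient_carrier_eq_image by blast
  with inner have "I +> s = (I +> s) \<otimes>\<^bsub>R Quot I\<^esub> (I +> y) \<otimes>\<^bsub>R Quot I\<^esub> (I +> s)"
    by (simp only:)
  also have "\<dots> = I +> (s \<otimes> y \<otimes> s)" using s y by simp
  finally have "s \<ominus> s \<otimes> y \<otimes> s \<in> I"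
    using rcos_eq_iff[of s "s \<otimes> y \<otimes> s"] s y by blast
  then show ?thesis using reg s y Regs_of_Regs_defect by blast
qed

lemma Idems_lift:
  assumes lift: "idempotents_lift R I" and \<epsilon>: "\<epsilon> \<in> Idems (R Quot I)"
  shows "\<exists>f \<in> Idems R. I +> f = \<epsilon>"
proof -
  interpret Q: ring_hom_ring R "R Quot I" "(+>) I" by (rule rcos_ring_hom_ring)
  from \<epsilon> obtain e where e: "e \<in> carrier R" and \<epsilon>e: "\<epsilon> = I +> e"
    unfolding Idems_def using quotient_carrier_eq_image by auto
  have "I +> (e \<otimes> e) = \<epsilon> \<otimes>\<^bsub>R Quot I\<^esub> \<epsilon>" using e \<epsilon>e by simp
  also have "\<dots> = I +> e" using \<epsilon> \<epsilon>e unfolding Idems_def by simp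
  finally have "e \<otimes> e \<ominus> e \<in> I" using rcos_eq_iff[of "e \<otimes> e" e] e by blast
  then obtain f where f: "f \<in> Idems R" and "f \<ominus> e \<in> I"
    using lift e unfolding idempotents_lift_def by blast
  then have "I +> f = \<epsilon>" using e \<epsilon>e rcos_eq_iff unfolding Idems_def by auto
  then show ?thesis using f by blast
qed

lemma weakly_r_clean_lift:
  assumes reg: "I \<subseteq> Regs R" and lift: "idempotents_lift R I"
    and clean: "weakly_r_clean (R Quot I)"
  shows "weakly_r_clean R"
  unfolding weakly_r_clean_def
proof
  interpret Q: ring_hom_ring R "R Quot I" "(+>) I" by (rule rcos_ring_hom_ring)
  fix x assume x: "x \<in> carrier R"
  then have hx: "I +> x \<in> carrier (R Quot I)" by simp
  with clean have "weakly_r_clean_elem (R Quot I) (I +> x)"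
    unfolding weakly_r_clean_def by blast
  then obtain \<epsilon> where \<epsilon>: "\<epsilon> \<in> Idems (R Quot I)" and reg_quot:
    "(I +> x) \<ominus>\<^bsub>R Quot I\<^esub> \<epsilon> \<in> Regs (R Quot I) \<or> (I +> x) \<oplus>\<^bsub>R Quot I\<^esub> \<epsilon> \<in> Regs (R Quot I)"
    using Q.S.weakly_r_clean_elem_iff[OF hx] by blast
  obtain f where f: "f \<in> Idems R" and f\<epsilon>: "I +> f = \<epsilon>"
    using Idems_lift[OF lift \<epsilon>] by blast
  have fc: "f \<in> carrier R" using f unfolding Idems_def by simp
  have "I +> (x \<ominus> f) = (I +> x) \<ominus>\<^bsub>R Quot I\<^esub> \<epsilon>" "I +> (x \<oplus> f) = (I +> x) \<oplus>\<^bsub>R Quot I\<^esub> \<epsilon>"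
    using x fc f\<epsilon> by (simp_all add: Q.hom_a_minus)
  with reg_quot have "x \<ominus> f \<in> Regs R \<or> x \<oplus> f \<in> Regs R"
    using Regs_lift[OF reg, of "x \<ominus> f"] Regs_lift[OF reg, of "x \<oplus> f"] x fc by auto
  then show "weakly_r_clean_elem R x" using weakly_r_clean_elem_iff[OF x] f by blast
qed

end

theorem theorem2p15:
  fixes R :: "('a, 'b) ring_scheme" and I :: "'a set"
  assumes "ring R"
    and "ideal I R"
    and "regular_ideal R I"
    and "idempotents_lift R I"
  shows "weakly_r_clean R \<longleftrightarrow> weakly_r_clean (R Quot I)"
proof -
  interpret ideal I R by fact
  interpret ring_hom_ring R "R Quot I" "a_r_coset R I" by (rule rcos_ring_hom_ring)
  have "I \<subseteq> Regs R" using assms(3) unfolding regular_ideal_def by simp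
  then show ?thesis
    using weakly_r_clean_image[OF quotient_carrier_eq_image[symmetric]]
      weakly_r_clean_lift[OF _ assms(4)] by blast
qed

end
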